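(* Let $k$ be a field of characteristic zero, $A_1=k[t,\partial]$ the first Weyl algebra, $R=k[t]$. Let $I$ be a right ideal of $A_1$ with $I\cap k[\partial]\neq\{0\}$, and let $W$ be the primary decomposable subspace of $R$ such that $\theta(I)=\mathcal{D}(R,W)$. Let $q(\partial)\in k[\partial]$ and $\tau:=\exp(\mathrm{ad}(q(\partial)))$. Then $\tau(I)=I$ if and only if $\theta(q(\partial))\in S(W)$.
   Context: $A_1$ is generated by $t,\partial$ with $\partial t-t\partial=1$. $\theta$ is the $k$-automorphism of $A_1$ with $\theta(\partial)=t$, $\theta(t)=-\partial$. Elements of $k(t)[\partial]$ act as $k$-linear endomorphisms of $k(t)$; for subspaces $V,W\subseteq k(t)$, $\mathcal{D}(V,W):=\{d\in k(t)[\partial]: d(V)\subseteq W\}$. For $b\in R$, $\mathcal{O}(b):=\{a\in R: a'\in bR\}$; for a subspace $V\subseteq R$, $S(V):=\{a\in R: aV\subseteq V\}$. A non-zero $k$-subspace $V$ of $R$ is primary decomposable if $S(V)\supseteq\mathcal{O}(b)$ for some $b\neq0$. For $q\in A_1$ with $d\mapsto [d,q]=dq-qd$ locally nilpotent (e.g. $q\in k[\partial]$), $\exp(\mathrm{ad}(q))$ is the automorphism $d\mapsto \sum_{j\ge0}\frac{1}{j!}\mathrm{ad}(q)^j(d)$ where $\mathrm{ad}(q)(d)=[d,q]$. *)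

theory Defs
  imports "HOL-Computational_Algebra.Polynomial" "HOL-Computational_Algebra.Fraction_Field"
begin

text \<open>The first Weyl algebra A_1 = k[t,d] is represented by normal forms
  sum_i a_i(t) d^i, i.e. by the type 'a poly poly: a polynomial in d whose
  coefficients are polynomials in t (written on the left).  R = k[t] is 'a poly.\<close>

definition weyl_mult :: "'a::field poly poly \<Rightarrow> 'a poly poly \<Rightarrow> 'a poly poly" where
  "weyl_mult p q = (\<Sum>i\<le>degree p. \<Sum>j\<le>degree q. \<Sum>l\<le>i.
      monom (smult (of_nat (i choose l)) (coeff p i * (pderiv ^^ l) (coeff q j))) (i + j - l))"

definition weyl_pow :: "'a::field poly poly \<Rightarrow> nat \<Rightarrow> 'a poly poly" where
  "weyl_pow x n = (weyl_mult x ^^ n) 1"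

definition weyl_scal :: "'a::field \<Rightarrow> 'a poly poly \<Rightarrow> 'a poly poly" where
  "weyl_scal c x = map_poly (smult c) x"

definition weyl_d :: "'a::field poly poly" where
  "weyl_d = monom 1 1"

definition weyl_t :: "'a::field poly poly" where
  "weyl_t = [:[:0, 1:]:]"

definition weyl_theta :: "'a::field poly poly \<Rightarrow> 'a poly poly" where
  "weyl_theta p = (\<Sum>i\<le>degree p. \<Sum>j\<le>degree (coeff p i).
      weyl_scal (coeff (coeff p i) j) (weyl_mult (weyl_pow (- weyl_d) j) (weyl_pow weyl_t i)))"

definition weyl_of_kd :: "'a::field poly \<Rightarrow> 'a poly poly" where
  "weyl_of_kd q = map_poly (\<lambda>c. [:c:]) q"

definition weyl_kd :: "'a::field poly poly set" where
  "weyl_kd = range weyl_of_kd"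

definition weyl_right_ideal :: "'a::field poly poly set \<Rightarrow> bool" where
  "weyl_right_ideal I \<longleftrightarrow> 0 \<in> I \<and> (\<forall>x\<in>I. \<forall>y\<in>I. x + y \<in> I) \<and>
     (\<forall>x\<in>I. \<forall>a. weyl_mult x a \<in> I)"

definition weyl_ad :: "'a::field poly poly \<Rightarrow> 'a poly poly \<Rightarrow> 'a poly poly" where
  "weyl_ad q d = weyl_mult d q - weyl_mult q d"

definition weyl_exp_ad :: "'a::field_char_0 poly poly \<Rightarrow> 'a poly poly \<Rightarrow> 'a poly poly" where
  "weyl_exp_ad q d = (\<Sum>j < (LEAST n. (weyl_ad q ^^ n) d = 0).
      weyl_scal (1 / fact j) ((weyl_ad q ^^ j) d))"

definition poly_to_frac :: "'a::field poly \<Rightarrow> 'a poly fract" where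
  "poly_to_frac p = Fract p 1"

definition diffop_act :: "'a::field poly fract poly \<Rightarrow> 'a poly \<Rightarrow> 'a poly fract" where
  "diffop_act d f = (\<Sum>i\<le>degree d. coeff d i * poly_to_frac ((pderiv ^^ i) f))"

definition D_RW :: "'a::field poly set \<Rightarrow> 'a poly fract poly set" where
  "D_RW W = {d. \<forall>f. diffop_act d f \<in> poly_to_frac ` W}"

definition k_subspace :: "'a::field poly set \<Rightarrow> bool" where
  "k_subspace V \<longleftrightarrow> 0 \<in> V \<and> (\<forall>x\<in>V. \<forall>y\<in>V. x + y \<in> V) \<and> (\<forall>c. \<forall>x\<in>V. smult c x \<in> V)"

definition stab_S :: "'a::field poly set \<Rightarrow> 'a poly set" where
  "stab_S V = {a. \<forall>v\<in>V. a * v \<in> V}"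

definition ord_O :: "'a::field poly \<Rightarrow> 'a poly set" where
  "ord_O b = {a. b dvd pderiv a}"

definition primary_decomposable :: "'a::field poly set \<Rightarrow> bool" where
  "primary_decomposable V \<longleftrightarrow> k_subspace V \<and> V \<noteq> {0} \<and> (\<exists>b. b \<noteq> 0 \<and> ord_O b \<subseteq> stab_S V)"

end

theory Submission
  imports Defs
begin

text \<open>Since theta(q(d)) = q(t) and theta commutes with exponentials of inner derivations,
  tau(I) = I amounts to exp(ad q(t)) J = J for J = theta(I), which the hypothesis identifies with
  the operators in k[t][d] mapping k[t] into W. Inner derivation by q(t) lowers the degree in d, so it
  is locally nilpotent, and a subspace is stable under its exponential iff it is stable under the
  derivation itself (induction on the degree in d). Finally [X, q](f) = X(q f) - q X(f): if qW is
  contained in W this keeps J stable; conversely, primary decomposability of W provides for each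
  w in W an X in J with X(1) = w, and evaluating [X, q] at 1 gives q w in W.
  Identities in the Weyl algebra are checked through its faithful action on k[t].\<close>

section \<open>The Weyl algebra acting on polynomials\<close>

definition weyl_act :: "'a::field poly poly \<Rightarrow> 'a poly \<Rightarrow> 'a poly" where
  "weyl_act x f = (\<Sum>i\<le>degree x. coeff x i * (pderiv ^^ i) f)"

notation weyl_mult (infixl "\<odot>" 70)

lemma weyl_act_eq_sum_atMost:
  assumes "degree x \<le> M"
  shows "weyl_act x f = (\<Sum>i\<le>M. coeff x i * (pderiv ^^ i) f)"
  unfolding weyl_act_def
  by (rule sum.mono_neutral_left) (use assms in \<open>auto simp: coeff_eq_0\<close>)

lemma weyl_act_0 [simp]: "weyl_act 0 f = 0"
  by (simp add: weyl_act_def)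

lemma weyl_act_add: "weyl_act (x + y) f = weyl_act x f + weyl_act y f"
proof -
  let ?M = "max (degree x) (max (degree y) (degree (x + y)))"
  show ?thesis
    by (subst (1 2 3) weyl_act_eq_sum_atMost[of _ ?M]) (auto simp: sum.distrib algebra_simps)
qed

lemma weyl_act_uminus: "weyl_act (- x) f = - weyl_act x f"
  by (simp add: weyl_act_def sum_negf)

lemma weyl_act_diff: "weyl_act (x - y) f = weyl_act x f - weyl_act y f"
  using weyl_act_add[of x "- y" f] by (simp add: weyl_act_uminus)

lemma weyl_act_sum: "weyl_act (\<Sum>a\<in>A. g a) f = (\<Sum>a\<in>A. weyl_act (g a) f)"
  by (induction A rule: infinite_finite_induct) (auto simp: weyl_act_add)

lemma weyl_act_monom: "weyl_act (monom a n) f = a * (pderiv ^^ n) f"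
proof -
  have "weyl_act (monom a n) f = (\<Sum>i\<le>n. coeff (monom a n) i * (pderiv ^^ i) f)"
    by (rule weyl_act_eq_sum_atMost) (simp add: degree_monom_le)
  also have "\<dots> = a * (pderiv ^^ n) f"
    by (subst sum.remove[of _ n]) (auto simp: coeff_monom)
  finally show ?thesis .
qed

lemma weyl_act_pCons0: "weyl_act [:a:] f = a * f"
  using weyl_act_monom[of a 0 f] by (simp add: monom_0)

lemma weyl_act_1 [simp]: "weyl_act 1 f = f"
  using weyl_act_pCons0[of 1 f] by (simp add: one_pCons)

lemma smult_sum_right: "smult c (\<Sum>a\<in>A. g a) = (\<Sum>a\<in>A. smult c (g a))"
  by (induction A rule: infinite_finite_induct) (auto simp: smult_add_right)

lemma weyl_act_weyl_scal: "weyl_act (weyl_scal c x) f = smult c (weyl_act x f)"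
proof -
  have "weyl_scal c x = smult [:c:] x"
    by (simp add: weyl_scal_def poly_eq_iff coeff_map_poly)
  moreover have "weyl_act (smult [:c:] x) f = (\<Sum>i\<le>degree x. coeff (smult [:c:] x) i * (pderiv ^^ i) f)"
    by (rule weyl_act_eq_sum_atMost) (simp add: degree_smult_le)
  ultimately show ?thesis
    by (simp add: weyl_act_def sum_distrib_left smult_sum_right)
qed

lemma weyl_act_add_right: "weyl_act x (f + g) = weyl_act x f + weyl_act x g"
  by (simp add: weyl_act_def higher_pderiv_add distrib_left sum.distrib)

lemma weyl_act_diff_right: "weyl_act x (f - g) = weyl_act x f - weyl_act x g"
  using weyl_act_add_right[of x "f - g" g] by simp

lemma weyl_act_smult_right: "weyl_act x (smult c f) = smult c (weyl_act x f)"
  by (simp add: weyl_act_def higher_pderiv_smult sum_distrib_left smult_sum_right)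

lemma weyl_act_0_right [simp]: "weyl_act x 0 = 0"
  by (simp add: weyl_act_def)

lemma pderiv_sum: "pderiv (\<Sum>a\<in>A. g a) = (\<Sum>a\<in>A. pderiv (g a))"
  using higher_pderiv_sum[of 1 g A] by simp

lemma higher_pderiv_minus: "(pderiv ^^ n) (- f) = - (pderiv ^^ n) (f::'a::field poly)"
  using higher_pderiv_smult[of n "- 1" f] by simp

lemma higher_pderiv_mult:
  "(pderiv ^^ n) (a * b) =
     (\<Sum>l\<le>n. smult (of_nat (n choose l)) ((pderiv ^^ l) a * (pderiv ^^ (n - l)) b))"
proof (induction n)
  case 0
  then show ?case by simp
next
  case (Suc n)
  define A where "A l = (pderiv ^^ l) a" for l
  define B where "B l = (pderiv ^^ l) b" for l
  have pA: "pderiv (A l) = A (Suc l)" and pB: "pderiv (B l) = B (Suc l)" for l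
    by (simp_all add: A_def B_def)
  have "(pderiv ^^ Suc n) (a * b) = pderiv (\<Sum>l\<le>n. smult (of_nat (n choose l)) (A l * B (n - l)))"
    using Suc by (simp add: A_def B_def)
  also have "\<dots> = (\<Sum>l\<le>n. smult (of_nat (n choose l)) (A (Suc l) * B (n - l))) +
                  (\<Sum>l\<le>n. smult (of_nat (n choose l)) (A l * B (Suc (n - l))))"
    by (simp add: pderiv_sum pderiv_smult pderiv_mult pA pB sum.distrib smult_add_right algebra_simps)
  also have "(\<Sum>l\<le>n. smult (of_nat (n choose l)) (A (Suc l) * B (n - l))) =
      (\<Sum>l\<le>Suc n. smult (of_nat (n choose (l - 1))) (if l = 0 then 0 else A l * B (Suc n - l)))"
    by (subst sum.atMost_Suc_shift) simp
  also have "(\<Sum>l\<le>n. smult (of_nat (n choose l)) (A l * B (Suc (n - l)))) =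
             (\<Sum>l\<le>Suc n. smult (of_nat (n choose l)) (A l * B (Suc n - l)))"
    by (simp add: Suc_diff_le binomial_eq_0)
  also have "(\<Sum>l\<le>Suc n. smult (of_nat (n choose (l - 1))) (if l = 0 then 0 else A l * B (Suc n - l))) +
             (\<Sum>l\<le>Suc n. smult (of_nat (n choose l)) (A l * B (Suc n - l))) =
             (\<Sum>l\<le>Suc n. smult (of_nat (Suc n choose l)) (A l * B (Suc n - l)))"
    unfolding sum.distrib[symmetric]
  proof (rule sum.cong)
    fix l
    show "smult (of_nat (n choose (l - 1))) (if l = 0 then 0 else A l * B (Suc n - l)) +
          smult (of_nat (n choose l)) (A l * B (Suc n - l)) =
          smult (of_nat (Suc n choose l)) (A l * B (Suc n - l))"
      by (cases l) (simp_all add: smult_add_left[symmetric] add.commute)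
  qed simp
  finally show ?case by (simp add: A_def B_def)
qed

lemma higher_pderiv_higher_pderiv: "(pderiv ^^ m) ((pderiv ^^ n) f) = (pderiv ^^ (m + n)) f"
  by (simp add: funpow_add)

lemma weyl_act_mult: "weyl_act (x \<odot> y) f = weyl_act x (weyl_act y f)"
proof -
  have "weyl_act (x \<odot> y) f = (\<Sum>i\<le>degree x. \<Sum>j\<le>degree y. \<Sum>l\<le>i.
      smult (of_nat (i choose l)) (coeff x i * (pderiv ^^ l) (coeff y j)) * (pderiv ^^ (i + j - l)) f)"
    by (simp add: weyl_mult_def weyl_act_sum weyl_act_monom)
  also have "\<dots> = (\<Sum>i\<le>degree x. coeff x i * (\<Sum>j\<le>degree y. \<Sum>l\<le>i.
      smult (of_nat (i choose l)) ((pderiv ^^ l) (coeff y j) * (pderiv ^^ (i - l)) ((pderiv ^^ j) f))))"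
    by (auto simp: sum_distrib_left higher_pderiv_higher_pderiv mult.assoc intro!: sum.cong)
  also have "\<dots> = weyl_act x (weyl_act y f)"
    by (simp add: weyl_act_def higher_pderiv_sum higher_pderiv_mult)
  finally show ?thesis .
qed

lemma higher_pderiv_monom_self: "(pderiv ^^ n) (monom c n) = [:fact n * c:]"
  by (simp add: poly_eq_iff coeff_higher_pderiv coeff_monom pochhammer_fact coeff_pCons split: nat.split)

lemma higher_pderiv_monom_gt:
  "n < m \<Longrightarrow> (pderiv ^^ m) (monom (c::'a::field_char_0) n) = 0"
  by (simp add: poly_eq_iff coeff_higher_pderiv coeff_monom)

text \<open>In characteristic zero the action is faithful: the lowest non-zero coefficient of x is
  detected by the monomial of the same degree.\<close>
lemma weyl_act_eq_0_imp:
  fixes x :: "'a::field_char_0 poly poly"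
  assumes "\<And>f. weyl_act x f = 0"
  shows "x = 0"
proof (rule ccontr)
  assume "x \<noteq> 0"
  define i0 where "i0 = (LEAST i. coeff x i \<noteq> 0)"
  have "\<exists>i. coeff x i \<noteq> 0" using \<open>x \<noteq> 0\<close> by (metis leading_coeff_0_iff)
  then have c0: "coeff x i0 \<noteq> 0" unfolding i0_def by (rule LeastI_ex)
  have below: "coeff x i = 0" if "i < i0" for i
    using not_less_Least[of i "\<lambda>i. coeff x i \<noteq> 0"] that unfolding i0_def by blast
  have "i0 \<le> degree x" using c0 le_degree by blast
  have others: "coeff x i * (pderiv ^^ i) (monom 1 i0) = 0" if "i \<noteq> i0" for i
    using that by (cases "i < i0") (simp_all add: below higher_pderiv_monom_gt)
  have "weyl_act x (monom 1 i0) = coeff x i0 * (pderiv ^^ i0) (monom 1 i0)"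
    unfolding weyl_act_def using \<open>i0 \<le> degree x\<close>
    by (subst sum.remove[of _ i0]) (auto simp: others)
  also have "\<dots> = smult (fact i0) (coeff x i0)"
    by (simp add: higher_pderiv_monom_self)
  finally show False using assms c0 by simp
qed

lemma weyl_act_inject:
  fixes x :: "'a::field_char_0 poly poly"
  assumes "\<And>f. weyl_act x f = weyl_act y f"
  shows "x = y"
  using weyl_act_eq_0_imp[of "x - y"] assms by (simp add: weyl_act_diff)

lemma weyl_mult_assoc: "(x \<odot> y) \<odot> z = x \<odot> (y \<odot> (z::'a::field_char_0 poly poly))"
  by (rule weyl_act_inject) (simp add: weyl_act_mult)

lemma weyl_mult_add_left: "(x + y) \<odot> z = x \<odot> z + y \<odot> (z::'a::field_char_0 poly poly)"
  by (rule weyl_act_inject) (simp add: weyl_act_mult weyl_act_add)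

lemma weyl_mult_add_right: "z \<odot> (x + y) = z \<odot> x + z \<odot> (y::'a::field_char_0 poly poly)"
  by (rule weyl_act_inject) (simp add: weyl_act_mult weyl_act_add weyl_act_add_right)

lemma weyl_mult_diff_left: "(x - y) \<odot> z = x \<odot> z - y \<odot> (z::'a::field_char_0 poly poly)"
  by (rule weyl_act_inject) (simp add: weyl_act_mult weyl_act_diff)

lemma weyl_mult_diff_right: "z \<odot> (x - y) = z \<odot> x - z \<odot> (y::'a::field_char_0 poly poly)"
  by (rule weyl_act_inject) (simp add: weyl_act_mult weyl_act_diff weyl_act_diff_right)

lemma weyl_mult_0_left [simp]: "0 \<odot> (z::'a::field_char_0 poly poly) = 0"
  by (rule weyl_act_inject) (simp add: weyl_act_mult)

lemma weyl_mult_0_right [simp]: "z \<odot> 0 = (0::'a::field_char_0 poly poly)"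
  by (rule weyl_act_inject) (simp add: weyl_act_mult)

lemma weyl_mult_1_left [simp]: "1 \<odot> (z::'a::field_char_0 poly poly) = z"
  by (rule weyl_act_inject) (simp add: weyl_act_mult)

lemma weyl_mult_1_right [simp]: "z \<odot> 1 = (z::'a::field_char_0 poly poly)"
  by (rule weyl_act_inject) (simp add: weyl_act_mult)

lemma weyl_mult_weyl_scal_left: "weyl_scal c x \<odot> z = weyl_scal c (x \<odot> (z::'a::field_char_0 poly poly))"
  by (rule weyl_act_inject) (simp add: weyl_act_mult weyl_act_weyl_scal)

lemma weyl_mult_weyl_scal_right: "z \<odot> weyl_scal c x = weyl_scal c (z \<odot> (x::'a::field_char_0 poly poly))"
  by (rule weyl_act_inject) (simp add: weyl_act_mult weyl_act_weyl_scal weyl_act_smult_right)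

lemma weyl_scal_add_left: "weyl_scal (a + b) x = weyl_scal a x + weyl_scal b (x::'a::field poly poly)"
  by (simp add: weyl_scal_def poly_eq_iff coeff_map_poly smult_add_left)

lemma weyl_scal_add_right: "weyl_scal c (x + y) = weyl_scal c x + weyl_scal c (y::'a::field poly poly)"
  by (simp add: weyl_scal_def poly_eq_iff coeff_map_poly smult_add_right)

lemma weyl_scal_diff_right: "weyl_scal c (x - y) = weyl_scal c x - weyl_scal c (y::'a::field poly poly)"
  by (simp add: weyl_scal_def poly_eq_iff coeff_map_poly smult_diff_right)

lemma weyl_scal_0_left [simp]: "weyl_scal 0 (x::'a::field poly poly) = 0"
  by (simp add: weyl_scal_def poly_eq_iff coeff_map_poly)

lemma weyl_scal_0_right [simp]: "weyl_scal c (0::'a::field poly poly) = 0"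
  by (simp add: weyl_scal_def)

lemma weyl_scal_1 [simp]: "weyl_scal 1 (x::'a::field poly poly) = x"
  by (simp add: weyl_scal_def poly_eq_iff coeff_map_poly)

lemma weyl_scal_weyl_scal: "weyl_scal a (weyl_scal b x) = weyl_scal (a * b) (x::'a::field poly poly)"
  by (simp add: weyl_scal_def poly_eq_iff coeff_map_poly)

lemma weyl_scal_minus_1: "weyl_scal (- 1) x = - (x::'a::field poly poly)"
  by (simp add: weyl_scal_def poly_eq_iff coeff_map_poly)

lemma weyl_scal_sum_right: "weyl_scal c (\<Sum>a\<in>A. g a) = (\<Sum>a\<in>A. weyl_scal c (g a::'a::field poly poly))"
  by (induction A rule: infinite_finite_induct) (simp_all add: weyl_scal_add_right)

lemma weyl_act_weyl_pow: "weyl_act (weyl_pow x n) f = (weyl_act x ^^ n) f"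
  by (induction n arbitrary: f) (simp_all add: weyl_pow_def weyl_act_mult)

lemma weyl_pow_1 [simp]: "weyl_pow x (Suc 0) = (x::'a::field_char_0 poly poly)"
  by (simp add: weyl_pow_def)

lemma weyl_pow_0 [simp]: "weyl_pow x 0 = 1"
  by (simp add: weyl_pow_def)

lemma weyl_act_weyl_t: "weyl_act weyl_t f = [:0, 1:] * f"
  by (simp add: weyl_t_def weyl_act_pCons0)

lemma weyl_act_weyl_d: "weyl_act weyl_d f = pderiv f"
  by (simp add: weyl_d_def weyl_act_monom)

section \<open>The automorphism theta\<close>

definition weyl_monom :: "nat \<Rightarrow> nat \<Rightarrow> 'a::field poly poly" where
  "weyl_monom j i = monom (monom 1 j) i"

definition theta_monom :: "nat \<Rightarrow> nat \<Rightarrow> 'a::field poly poly" where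
  "theta_monom j i = weyl_pow (- weyl_d) j \<odot> weyl_pow weyl_t i"

lemma weyl_act_weyl_monom: "weyl_act (weyl_monom j i) f = monom 1 j * (pderiv ^^ i) f"
  by (simp add: weyl_monom_def weyl_act_monom)

lemma weyl_act_theta_monom:
  "weyl_act (theta_monom j i) f = smult ((-1) ^ j) ((pderiv ^^ j) (monom 1 i * (f::'a::field_char_0 poly)))"
proof -
  have neg_d: "(weyl_act (- weyl_d) ^^ j) g = smult ((-1) ^ j) ((pderiv ^^ j) g)" for g :: "'a poly"
    by (induction j) (simp_all add: weyl_act_uminus weyl_act_weyl_d pderiv_smult)
  have t: "(weyl_act weyl_t ^^ i) f = monom 1 i * f"
    by (induction i) (simp_all add: weyl_act_weyl_t monom_Suc pCons_one)
  show ?thesis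
    by (simp add: theta_monom_def weyl_act_mult weyl_act_weyl_pow neg_d t)
qed

definition weyl_t_degree :: "'a::zero poly poly \<Rightarrow> nat" where
  "weyl_t_degree x = Max ((\<lambda>i. degree (coeff x i)) ` {..degree x})"

lemma degree_coeff_le_weyl_t_degree: "degree (coeff x i) \<le> weyl_t_degree x"
proof (cases "i \<le> degree x")
  case True
  then show ?thesis unfolding weyl_t_degree_def by (intro Max_ge) auto
qed (simp add: coeff_eq_0)

lemma weyl_expansion:
  fixes x :: "'a::field poly poly"
  assumes "degree x \<le> A" and "\<And>i. degree (coeff x i) \<le> B"
  shows "x = (\<Sum>i\<le>A. \<Sum>j\<le>B. weyl_scal (coeff (coeff x i) j) (weyl_monom j i))"
proof -
  have "(\<Sum>i\<le>A. \<Sum>j\<le>B. weyl_scal (coeff (coeff x i) j) (weyl_monom j i)) =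
        (\<Sum>i\<le>A. monom (\<Sum>j\<le>B. monom (coeff (coeff x i) j) j) i)"
    by (simp add: weyl_scal_def weyl_monom_def map_poly_monom smult_monom monom_sum)
  also have "\<dots> = x"
    using assms by (simp add: poly_as_sum_of_monoms')
  finally show ?thesis ..
qed

lemma weyl_theta_eq_sum_atMost:
  fixes x :: "'a::field poly poly"
  assumes "degree x \<le> A" and "\<And>i. degree (coeff x i) \<le> B"
  shows "weyl_theta x = (\<Sum>i\<le>A. \<Sum>j\<le>B. weyl_scal (coeff (coeff x i) j) (theta_monom j i))"
proof -
  have "weyl_theta x =
      (\<Sum>i\<le>degree x. \<Sum>j\<le>degree (coeff x i). weyl_scal (coeff (coeff x i) j) (theta_monom j i))"
    by (simp add: weyl_theta_def theta_monom_def)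
  also have "\<dots> = (\<Sum>i\<le>degree x. \<Sum>j\<le>B. weyl_scal (coeff (coeff x i) j) (theta_monom j i))"
    by (intro sum.cong refl sum.mono_neutral_left) (use assms(2) in \<open>auto simp: coeff_eq_0\<close>)
  also have "\<dots> = (\<Sum>i\<le>A. \<Sum>j\<le>B. weyl_scal (coeff (coeff x i) j) (theta_monom j i))"
    by (rule sum.mono_neutral_left) (use assms(1) in \<open>auto simp: coeff_eq_0\<close>)
  finally show ?thesis .
qed

lemma weyl_theta_add: "weyl_theta (x + y) = weyl_theta x + weyl_theta (y::'a::field poly poly)"
proof -
  let ?A = "max (degree x) (max (degree y) (degree (x + y)))"
  let ?B = "max (weyl_t_degree x) (max (weyl_t_degree y) (weyl_t_degree (x + y)))"
  have "degree (coeff z i) \<le> ?B" if "z \<in> {x, y, x + y}" for z i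
    using that degree_coeff_le_weyl_t_degree[of z i] by auto
  then have "weyl_theta z = (\<Sum>i\<le>?A. \<Sum>j\<le>?B. weyl_scal (coeff (coeff z i) j) (theta_monom j i))"
    if "z \<in> {x, y, x + y}" for z
    using that by (intro weyl_theta_eq_sum_atMost) auto
  then show ?thesis
    by (simp add: weyl_scal_add_left sum.distrib)
qed

lemma weyl_theta_weyl_scal:
  "weyl_theta (weyl_scal c x) = weyl_scal c (weyl_theta (x::'a::field poly poly))"
proof -
  have coeff_scal: "coeff (weyl_scal c x) i = smult c (coeff x i)" for i
    by (simp add: weyl_scal_def coeff_map_poly)
  have "degree (weyl_scal c x) \<le> degree x"
    by (rule degree_le) (simp add: coeff_scal coeff_eq_0)
  moreover have "degree (coeff (weyl_scal c x) i) \<le> weyl_t_degree x" for i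
    unfolding coeff_scal
    using degree_smult_le order_trans degree_coeff_le_weyl_t_degree by blast
  ultimately show ?thesis
    by (simp add: weyl_theta_eq_sum_atMost[of _ "degree x" "weyl_t_degree x"]
        degree_coeff_le_weyl_t_degree coeff_scal weyl_scal_weyl_scal weyl_scal_sum_right)
qed

lemma weyl_theta_0 [simp]: "weyl_theta (0::'a::field poly poly) = 0"
  using weyl_theta_weyl_scal[of 0 "0::'a poly poly"] by simp

lemma weyl_theta_uminus: "weyl_theta (- x) = - weyl_theta (x::'a::field poly poly)"
  using weyl_theta_weyl_scal[of "- 1" x] by (simp add: weyl_scal_minus_1)

lemma weyl_theta_diff: "weyl_theta (x - y) = weyl_theta x - weyl_theta (y::'a::field poly poly)"
  using weyl_theta_add[of x "- y"] by (simp add: weyl_theta_uminus)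

lemma weyl_theta_sum: "weyl_theta (\<Sum>a\<in>A. g a) = (\<Sum>a\<in>A. weyl_theta (g a::'a::field poly poly))"
  by (induction A rule: infinite_finite_induct) (simp_all add: weyl_theta_add)

lemma weyl_scal_if_1_0: "weyl_scal (if P then 1 else 0) x = (if P then x else 0)"
  by simp

lemma weyl_theta_weyl_monom: "weyl_theta (weyl_monom j i) = (theta_monom j i :: 'a::field poly poly)"
proof -
  have "degree (weyl_monom j i :: 'a poly poly) \<le> i"
    and "degree (coeff (weyl_monom j i :: 'a poly poly) i') \<le> j" for i'
    by (simp_all add: weyl_monom_def degree_monom_le coeff_monom)
  then have "weyl_theta (weyl_monom j i :: 'a poly poly) =
      (\<Sum>i'\<le>i. \<Sum>j'\<le>j. weyl_scal (coeff (coeff (weyl_monom j i) i') j') (theta_monom j' i'))"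
    by (rule weyl_theta_eq_sum_atMost)
  also have "\<dots> = (\<Sum>i'\<le>i. if i' = i then (\<Sum>j'\<le>j. if j' = j then theta_monom j i else 0) else 0)"
    by (intro sum.cong refl) (simp add: weyl_monom_def coeff_monom weyl_scal_if_1_0)
  finally show ?thesis
    by simp
qed

lemma weyl_monom_induct [case_names zero add scal monom]:
  fixes P :: "'a::field poly poly \<Rightarrow> bool"
  assumes "P 0" and "\<And>x y. P x \<Longrightarrow> P y \<Longrightarrow> P (x + y)" and "\<And>c x. P x \<Longrightarrow> P (weyl_scal c x)"
    and "\<And>j i. P (weyl_monom j i)"
  shows "P x"
proof -
  have sum: "P (\<Sum>a\<in>A. g a)" if "\<And>a. P (g a)" for A and g :: "nat \<Rightarrow> 'a poly poly"
    using that by (induction A rule: infinite_finite_induct) (simp_all add: assms(1,2))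
  have "P (\<Sum>i\<le>degree x. \<Sum>j\<le>weyl_t_degree x. weyl_scal (coeff (coeff x i) j) (weyl_monom j i))"
    by (intro sum assms(3,4))
  then show ?thesis
    by (simp flip: weyl_expansion[OF order_refl degree_coeff_le_weyl_t_degree])
qed

lemma weyl_monom_0_0: "weyl_monom 0 0 = 1"
  by (simp add: weyl_monom_def monom_0 one_pCons)

lemma weyl_monom_mult_t:
  "weyl_monom j i \<odot> weyl_t =
     weyl_monom (Suc j) i + weyl_scal (of_nat i) (weyl_monom j (i - 1) :: 'a::field_char_0 poly poly)"
proof -
  have leibniz: "(pderiv ^^ i) (pCons 0 f) = pCons 0 ((pderiv ^^ i) f) + smult (of_nat i) ((pderiv ^^ (i - 1)) f)"
    for f :: "'a poly"
  proof (induction i)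
    case (Suc i)
    show ?case
    proof (cases i)
      case (Suc m)
      have "(pderiv ^^ Suc i) (pCons 0 f) =
          pderiv (pCons 0 ((pderiv ^^ i) f) + smult (of_nat i) ((pderiv ^^ (i - 1)) f))"
        using Suc.IH by simp
      also have "\<dots> = (pderiv ^^ i) f + pCons 0 ((pderiv ^^ Suc i) f) + smult (of_nat i) ((pderiv ^^ i) f)"
        using Suc by (simp add: pderiv_add pderiv_smult pderiv_pCons)
      also have "\<dots> = pCons 0 ((pderiv ^^ Suc i) f) + smult (of_nat (Suc i)) ((pderiv ^^ i) f)"
        by (simp add: smult_add_left algebra_simps)
      finally show ?thesis by simp
    qed (simp add: pderiv_pCons)
  qed simp
  show ?thesis
    by (rule weyl_act_inject)
      (simp add: weyl_act_mult weyl_act_add weyl_act_weyl_scal weyl_act_weyl_monom weyl_act_weyl_t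
        leibniz monom_Suc algebra_simps)
qed

lemma weyl_monom_Suc_0: "weyl_monom (Suc j) 0 = weyl_monom j 0 \<odot> (weyl_t :: 'a::field_char_0 poly poly)"
  by (simp add: weyl_monom_mult_t)

lemma weyl_monom_mult_d: "weyl_monom j i \<odot> weyl_d = (weyl_monom j (Suc i) :: 'a::field_char_0 poly poly)"
  by (rule weyl_act_inject)
    (simp add: weyl_act_mult weyl_act_weyl_monom weyl_act_weyl_d funpow_Suc_right del: funpow.simps)

lemma theta_monom_mult_neg_d:
  "theta_monom j i \<odot> (- weyl_d) =
     theta_monom (Suc j) i + weyl_scal (of_nat i) (theta_monom j (i - 1) :: 'a::field_char_0 poly poly)"
proof (rule weyl_act_inject)
  fix f :: "'a poly"
  have "pderiv (monom 1 i * f) = monom 1 i * pderiv f + smult (of_nat i) (monom 1 (i - 1) * f)"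
    by (simp add: pderiv_mult pderiv_monom mult_smult_left smult_monom mult.commute
        flip: mult_smult_right)
  then show "weyl_act (theta_monom j i \<odot> - weyl_d) f =
      weyl_act (theta_monom (Suc j) i + weyl_scal (of_nat i) (theta_monom j (i - 1))) f"
    by (simp add: weyl_act_mult weyl_act_add weyl_act_uminus weyl_act_weyl_d weyl_act_weyl_scal
        weyl_act_theta_monom funpow_Suc_right higher_pderiv_add higher_pderiv_smult
        higher_pderiv_minus smult_add_right mult.commute del: funpow.simps)
qed

lemma theta_monom_mult_t: "theta_monom j i \<odot> weyl_t = (theta_monom j (Suc i) :: 'a::field_char_0 poly poly)"
  by (rule weyl_act_inject)
    (simp add: weyl_act_mult weyl_act_theta_monom weyl_act_weyl_t monom_Suc mult.assoc)

lemma weyl_theta_1 [simp]: "weyl_theta 1 = (1 :: 'a::field_char_0 poly poly)"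
  using weyl_theta_weyl_monom[of 0 0, where 'a='a] by (simp add: weyl_monom_0_0 theta_monom_def)

lemma weyl_theta_mult_right:
  fixes z Z :: "'a::field_char_0 poly poly"
  assumes "\<And>j i. weyl_theta (weyl_monom j i \<odot> z) = theta_monom j i \<odot> Z"
  shows "weyl_theta (x \<odot> z) = weyl_theta x \<odot> Z"
  by (induction x rule: weyl_monom_induct)
    (simp_all add: weyl_mult_add_left weyl_theta_add weyl_mult_weyl_scal_left weyl_theta_weyl_scal
      weyl_theta_weyl_monom assms)

lemma weyl_theta_mult_t: "weyl_theta (x \<odot> weyl_t) = weyl_theta x \<odot> (- weyl_d :: 'a::field_char_0 poly poly)"
  by (rule weyl_theta_mult_right)
    (simp add: weyl_monom_mult_t weyl_theta_add weyl_theta_weyl_scal weyl_theta_weyl_monom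
      theta_monom_mult_neg_d)

lemma weyl_theta_mult_d: "weyl_theta (x \<odot> weyl_d) = weyl_theta x \<odot> (weyl_t :: 'a::field_char_0 poly poly)"
  by (rule weyl_theta_mult_right) (simp add: weyl_monom_mult_d weyl_theta_weyl_monom theta_monom_mult_t)

lemma weyl_induct [case_names zero add scal one mult_t mult_d]:
  fixes P :: "'a::field_char_0 poly poly \<Rightarrow> bool"
  assumes "P 0" and "\<And>x y. P x \<Longrightarrow> P y \<Longrightarrow> P (x + y)" and "\<And>c x. P x \<Longrightarrow> P (weyl_scal c x)"
    and "P 1" and "\<And>x. P x \<Longrightarrow> P (x \<odot> weyl_t)" and "\<And>x. P x \<Longrightarrow> P (x \<odot> weyl_d)"
  shows "P x"
proof (induction x rule: weyl_monom_induct)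
  case (monom j i)
  have "P (weyl_monom j 0)"
    by (induction j) (simp_all add: weyl_monom_0_0 weyl_monom_Suc_0 assms(4,5))
  then show ?case
    by (induction i) (simp_all add: assms(6) flip: weyl_monom_mult_d)
qed (use assms in auto)

lemma weyl_theta_mult: "weyl_theta (x \<odot> y) = weyl_theta x \<odot> weyl_theta (y :: 'a::field_char_0 poly poly)"
  by (induction y rule: weyl_induct)
    (simp_all add: weyl_mult_add_right weyl_theta_add weyl_mult_weyl_scal_right weyl_theta_weyl_scal
      weyl_theta_1 weyl_theta_mult_t weyl_theta_mult_d flip: weyl_mult_assoc)

lemma weyl_theta_t: "weyl_theta weyl_t = (- weyl_d :: 'a::field_char_0 poly poly)"
  using weyl_theta_weyl_monom[of 1 0, where 'a='a]
  by (simp add: weyl_t_def weyl_monom_def theta_monom_def monom_0 monom_Suc)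

lemma weyl_theta_d: "weyl_theta weyl_d = (weyl_t :: 'a::field_char_0 poly poly)"
  using weyl_theta_weyl_monom[of 0 1, where 'a='a]
  by (simp add: weyl_d_def weyl_monom_def theta_monom_def monom_0 pCons_one)

lemma weyl_theta_4: "weyl_theta (weyl_theta (weyl_theta (weyl_theta x))) = (x :: 'a::field_char_0 poly poly)"
  by (induction x rule: weyl_induct)
    (simp_all add: weyl_theta_add weyl_theta_weyl_scal weyl_theta_mult weyl_theta_uminus
      weyl_theta_t weyl_theta_d)

lemma inj_weyl_theta: "inj (weyl_theta :: 'a::field_char_0 poly poly \<Rightarrow> _)"
  by (rule inj_on_inverseI[where g = "\<lambda>x. weyl_theta (weyl_theta (weyl_theta x))"])
    (rule weyl_theta_4)

lemma weyl_theta_eq_0_iff: "weyl_theta x = 0 \<longleftrightarrow> (x :: 'a::field_char_0 poly poly) = 0"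
  using inj_weyl_theta[where 'a='a] weyl_theta_0[where 'a='a] by (metis injD)

lemma weyl_theta_weyl_of_kd: "weyl_theta (weyl_of_kd q) = [:q:]"
  for q :: "'a::field_char_0 poly"
proof (rule weyl_act_inject)
  fix f :: "'a poly"
  have coeff_kd: "coeff (weyl_of_kd q) i = [:coeff q i:]" for i
    by (simp add: weyl_of_kd_def coeff_map_poly)
  have "degree (weyl_of_kd q) \<le> degree q"
    by (rule degree_le) (simp add: coeff_kd coeff_eq_0)
  moreover have "degree (coeff (weyl_of_kd q) i) \<le> 0" for i
    by (simp add: coeff_kd)
  ultimately have "weyl_theta (weyl_of_kd q) =
      (\<Sum>i\<le>degree q. \<Sum>j\<le>0. weyl_scal (coeff (coeff (weyl_of_kd q) i) j) (theta_monom j i))"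
    by (rule weyl_theta_eq_sum_atMost)
  then have "weyl_act (weyl_theta (weyl_of_kd q)) f = (\<Sum>i\<le>degree q. smult (coeff q i) (monom 1 i * f))"
    by (simp add: weyl_theta_eq_sum_atMost weyl_act_sum weyl_act_weyl_scal coeff_kd weyl_act_theta_monom)
  also have "\<dots> = weyl_act [:q:] f"
    by (simp add: weyl_act_pCons0 smult_monom poly_as_sum_of_monoms
        flip: mult_smult_left sum_distrib_right)
  finally show "weyl_act (weyl_theta (weyl_of_kd q)) f = weyl_act [:q:] f" .
qed

lemma weyl_theta_weyl_ad: "weyl_theta (weyl_ad Q x) = weyl_ad (weyl_theta Q) (weyl_theta (x::'a::field_char_0 poly poly))"
  by (simp add: weyl_ad_def weyl_theta_diff weyl_theta_mult)

lemma weyl_theta_weyl_ad_power: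
  "weyl_theta ((weyl_ad Q ^^ n) x) = (weyl_ad (weyl_theta Q) ^^ n) (weyl_theta (x::'a::field_char_0 poly poly))"
  by (induction n) (simp_all add: weyl_theta_weyl_ad)

text \<open>The truncation index LEAST n. ad^n x = 0 is preserved because theta is injective.\<close>
lemma weyl_theta_weyl_exp_ad:
  "weyl_theta (weyl_exp_ad Q x) = weyl_exp_ad (weyl_theta Q) (weyl_theta (x::'a::field_char_0 poly poly))"
  unfolding weyl_exp_ad_def
  by (simp add: weyl_theta_sum weyl_theta_weyl_scal weyl_theta_eq_0_iff
      flip: weyl_theta_weyl_ad_power)

section \<open>Exponentials of inner derivations by polynomials in t\<close>

lemma weyl_ad_add: "weyl_ad P (x + y) = weyl_ad P x + weyl_ad P (y::'a::field_char_0 poly poly)"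
  by (simp add: weyl_ad_def weyl_mult_add_left weyl_mult_add_right)

lemma weyl_ad_diff: "weyl_ad P (x - y) = weyl_ad P x - weyl_ad P (y::'a::field_char_0 poly poly)"
  by (simp add: weyl_ad_def weyl_mult_diff_left weyl_mult_diff_right)

lemma weyl_ad_weyl_scal: "weyl_ad P (weyl_scal c x) = weyl_scal c (weyl_ad P (x::'a::field_char_0 poly poly))"
  by (simp add: weyl_ad_def weyl_mult_weyl_scal_left weyl_mult_weyl_scal_right weyl_scal_diff_right)

lemma weyl_ad_0 [simp]: "weyl_ad P 0 = (0::'a::field_char_0 poly poly)"
  by (simp add: weyl_ad_def)

lemma weyl_ad_sum: "weyl_ad P (\<Sum>a\<in>A. g a) = (\<Sum>a\<in>A. weyl_ad P (g a::'a::field_char_0 poly poly))"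
  by (induction A rule: infinite_finite_induct) (simp_all add: weyl_ad_add)

lemma weyl_ad_power_0 [simp]: "(weyl_ad P ^^ n) 0 = (0::'a::field_char_0 poly poly)"
  by (induction n) simp_all

lemma weyl_ad_power_diff:
  "(weyl_ad P ^^ n) (x - y) = (weyl_ad P ^^ n) x - (weyl_ad P ^^ n) (y::'a::field_char_0 poly poly)"
  by (induction n) (simp_all add: weyl_ad_diff)

lemma weyl_ad_power_weyl_scal:
  "(weyl_ad P ^^ n) (weyl_scal c x) = weyl_scal c ((weyl_ad P ^^ n) (x::'a::field_char_0 poly poly))"
  by (induction n) (simp_all add: weyl_ad_weyl_scal)

lemma weyl_ad_power_sum:
  "(weyl_ad P ^^ n) (\<Sum>a\<in>A. g a) = (\<Sum>a\<in>A. (weyl_ad P ^^ n) (g a::'a::field_char_0 poly poly))"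
  by (induction n) (simp_all add: weyl_ad_sum)

lemma weyl_ad_power_power: "(weyl_ad P ^^ m) ((weyl_ad P ^^ n) x) = (weyl_ad P ^^ (m + n)) x"
  by (simp add: funpow_add)

lemma coeff_pCons0_weyl_mult: "coeff ([:p:] \<odot> x) n = p * coeff x n"
  unfolding weyl_mult_def by (auto simp: coeff_sum coeff_monom coeff_eq_0)

lemma coeff_weyl_mult_pCons0:
  assumes "degree x \<le> n"
  shows "coeff (x \<odot> [:p:]) n = coeff x n * p"
proof -
  define g where "g i l = smult (of_nat (i choose l)) (coeff x i * (pderiv ^^ l) p)" for i l
  have "coeff (x \<odot> [:p:]) n = (\<Sum>i\<le>degree x. \<Sum>l\<le>i. if i - l = n then g i l else 0)"
    unfolding weyl_mult_def g_def by (simp add: coeff_sum coeff_monom)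
  also have "\<dots> = (\<Sum>i\<le>degree x. \<Sum>l\<le>i. if l = 0 then (if i = n then g n 0 else 0) else 0)"
    using assms by (intro sum.cong refl) auto
  also have "\<dots> = coeff x n * p"
    using assms by (simp add: g_def coeff_eq_0)
  finally show ?thesis .
qed

lemma coeff_weyl_ad_pCons0:
  "degree x \<le> n \<Longrightarrow> coeff (weyl_ad [:p:] x) n = 0"
  by (simp add: weyl_ad_def coeff_weyl_mult_pCons0 coeff_pCons0_weyl_mult mult.commute)

text \<open>Unlike degree y < m, this also holds for y = 0 when m = 0.\<close>
definition deg_below :: "nat \<Rightarrow> 'a::zero poly \<Rightarrow> bool" where
  "deg_below m y \<longleftrightarrow> (\<forall>n\<ge>m. coeff y n = 0)"

lemma deg_below_Suc_degree: "deg_below (Suc (degree y)) y"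
  by (simp add: deg_below_def coeff_eq_0)

lemma deg_below_imp_degree_less: "deg_below m y \<Longrightarrow> y \<noteq> 0 \<Longrightarrow> degree y < m"
  unfolding deg_below_def by (metis leading_coeff_0_iff not_le)

lemma deg_below_0 [simp]: "deg_below m 0"
  by (simp add: deg_below_def)

lemma deg_below_add: "deg_below m x \<Longrightarrow> deg_below m y \<Longrightarrow> deg_below m (x + y)"
  by (simp add: deg_below_def)

lemma deg_below_weyl_scal: "deg_below m x \<Longrightarrow> deg_below m (weyl_scal c x)"
  by (simp add: deg_below_def weyl_scal_def coeff_map_poly)

lemma deg_below_sum: "(\<And>a. a \<in> A \<Longrightarrow> deg_below m (g a)) \<Longrightarrow> deg_below m (\<Sum>a\<in>A. g a)"
  by (induction A rule: infinite_finite_induct) (simp_all add: deg_below_add)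

lemma deg_below_weyl_ad_self: "deg_below (degree y) (weyl_ad [:p:] (y::'a::field_char_0 poly poly))"
  by (simp add: deg_below_def coeff_weyl_ad_pCons0)

lemma deg_below_weyl_ad: "deg_below m y \<Longrightarrow> deg_below m (weyl_ad [:p:] (y::'a::field_char_0 poly poly))"
  using deg_below_imp_degree_less[of m y] coeff_weyl_ad_pCons0[of y _ p]
  by (cases "y = 0") (auto simp: deg_below_def)

lemma deg_below_weyl_ad_power:
  "deg_below m y \<Longrightarrow> deg_below m ((weyl_ad [:p:] ^^ k) (y::'a::field_char_0 poly poly))"
  by (induction k) (simp_all add: deg_below_weyl_ad)

lemma weyl_ad_power_eq_0:
  "deg_below m y \<Longrightarrow> (weyl_ad [:p:] ^^ m) (y::'a::field_char_0 poly poly) = 0"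
proof (induction m arbitrary: y)
  case 0
  then show ?case by (simp add: deg_below_def poly_eq_iff)
next
  case (Suc m)
  then have "deg_below m (weyl_ad [:p:] y)"
    using deg_below_imp_degree_less[of "Suc m" y] coeff_weyl_ad_pCons0[of y _ p]
    by (cases "y = 0") (auto simp: deg_below_def)
  then show ?case
    using Suc.IH by (simp add: funpow_Suc_right del: funpow.simps)
qed

definition exp_ad_trunc :: "nat \<Rightarrow> 'a::field_char_0 poly poly \<Rightarrow> 'a poly poly \<Rightarrow> 'a poly poly" where
  "exp_ad_trunc K P x = (\<Sum>j<K. weyl_scal (1 / fact j) ((weyl_ad P ^^ j) x))"

lemma weyl_exp_ad_eq_trunc:
  fixes x :: "'a::field_char_0 poly poly"
  assumes "deg_below K x"
  shows "weyl_exp_ad [:p:] x = exp_ad_trunc K [:p:] x"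
proof -
  let ?N = "weyl_ad [:p:]"
  let ?L = "LEAST n. (?N ^^ n) x = 0"
  have "(?N ^^ K) x = 0"
    using assms by (rule weyl_ad_power_eq_0)
  then have "?L \<le> K" and "(?N ^^ ?L) x = 0"
    by (auto intro: Least_le LeastI)
  moreover have "(?N ^^ j) x = 0" if "?L \<le> j" and "(?N ^^ ?L) x = 0" for j
    using that weyl_ad_power_power[where P = "[:p:]" and m = "j - ?L" and n = ?L and x = x] by simp
  ultimately show ?thesis
    unfolding weyl_exp_ad_def exp_ad_trunc_def by (intro sum.mono_neutral_left) auto
qed

lemma weyl_exp_ad_diff:
  fixes x y :: "'a::field_char_0 poly poly"
  shows "weyl_exp_ad [:p:] (x - y) = weyl_exp_ad [:p:] x - weyl_exp_ad [:p:] y"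
proof -
  let ?K = "Suc (max (degree x) (max (degree y) (degree (x - y))))"
  have "deg_below ?K z" if "z \<in> {x, y, x - y}" for z
    using that by (auto simp: deg_below_def coeff_eq_0)
  then show ?thesis
    by (simp add: weyl_exp_ad_eq_trunc[of ?K] exp_ad_trunc_def weyl_ad_power_diff
        weyl_scal_diff_right sum_subtractf)
qed

lemma weyl_exp_ad_minus_self:
  fixes x :: "'a::field_char_0 poly poly"
  assumes "deg_below K x" and "0 < K"
  shows "weyl_exp_ad [:p:] x - x = (\<Sum>j\<in>{1..<K}. weyl_scal (1 / fact j) ((weyl_ad [:p:] ^^ j) x))"
proof -
  have "{..<K} = insert 0 {1..<K}"
    using assms(2) by auto
  then show ?thesis
    by (simp add: weyl_exp_ad_eq_trunc[OF assms(1)] exp_ad_trunc_def)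
qed

lemma deg_below_weyl_exp_ad_minus_self:
  "deg_below (degree x) (weyl_exp_ad [:p:] x - (x::'a::field_char_0 poly poly))"
proof -
  have "deg_below (degree x) ((weyl_ad [:p:] ^^ Suc i) x)" for i
    using deg_below_weyl_ad_power[OF deg_below_weyl_ad_self[of x p]]
    by (simp add: funpow_Suc_right del: funpow.simps)
  then have "deg_below (degree x) ((weyl_ad [:p:] ^^ j) x)" if "1 \<le> j" for j
    using that by (cases j) auto
  then show ?thesis
    unfolding weyl_exp_ad_minus_self[OF deg_below_Suc_degree zero_less_Suc]
    by (intro deg_below_sum deg_below_weyl_scal) auto
qed

definition weyl_subspace :: "'a::field poly poly set \<Rightarrow> bool" where
  "weyl_subspace J \<longleftrightarrow> 0 \<in> J \<and> (\<forall>x\<in>J. \<forall>y\<in>J. x + y \<in> J \<and> x - y \<in> J) \<and> (\<forall>x\<in>J. \<forall>c. weyl_scal c x \<in> J)"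

lemma weyl_subspace_0: "weyl_subspace J \<Longrightarrow> 0 \<in> J"
  and weyl_subspace_diff: "weyl_subspace J \<Longrightarrow> x \<in> J \<Longrightarrow> y \<in> J \<Longrightarrow> x - y \<in> J"
  and weyl_subspace_weyl_scal: "weyl_subspace J \<Longrightarrow> x \<in> J \<Longrightarrow> weyl_scal c x \<in> J"
  by (simp_all add: weyl_subspace_def)

lemma weyl_subspace_sum:
  "weyl_subspace J \<Longrightarrow> (\<And>a. a \<in> A \<Longrightarrow> g a \<in> J) \<Longrightarrow> (\<Sum>a\<in>A. g a) \<in> J"
  by (induction A rule: infinite_finite_induct) (auto simp: weyl_subspace_def)

text \<open>Downward induction on k: ad^(k-1) applied to exp(ad) x - x is ad^k x plus a combination of
  higher powers of ad applied to x.\<close>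
lemma weyl_ad_power_mem_if_exp_ad_minus_self:
  fixes x :: "'a::field_char_0 poly poly"
  assumes J: "weyl_subspace J" and K: "deg_below K x" "0 < K"
    and e: "\<And>k. (weyl_ad [:p:] ^^ k) (weyl_exp_ad [:p:] x - x) \<in> J"
  shows "0 < k \<Longrightarrow> (weyl_ad [:p:] ^^ k) x \<in> J"
proof (induction "K - k" arbitrary: k rule: less_induct)
  case less
  let ?N = "weyl_ad [:p:]"
  show ?case
  proof (cases "K \<le> k")
    case True
    then have "(?N ^^ k) x = (?N ^^ (k - K)) ((?N ^^ K) x)"
      by (simp add: weyl_ad_power_power)
    then show ?thesis
      by (simp add: weyl_ad_power_eq_0[OF K(1)] weyl_subspace_0[OF J])
  next
    case False
    let ?rest = "\<Sum>j\<in>{2..<K}. weyl_scal (1 / fact j) ((?N ^^ (k - 1 + j)) x)"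
    have "{1..<K} = insert 1 {2..<K}"
      using False less.prems by auto
    have "(?N ^^ (k - 1)) (weyl_exp_ad [:p:] x - x) =
        (\<Sum>j\<in>{1..<K}. weyl_scal (1 / fact j) ((?N ^^ (k - 1 + j)) x))"
      by (simp only: weyl_exp_ad_minus_self[OF K] weyl_ad_power_sum weyl_ad_power_weyl_scal
          weyl_ad_power_power)
    also have "\<dots> = (?N ^^ k) x + ?rest"
      using \<open>{1..<K} = insert 1 {2..<K}\<close> less.prems by simp
    finally have "(?N ^^ k) x = (?N ^^ (k - 1)) (weyl_exp_ad [:p:] x - x) - ?rest"
      by simp
    moreover have "?rest \<in> J"
    proof (rule weyl_subspace_sum[OF J])
      fix j assume "j \<in> {2..<K}"
      with False less.prems have "(?N ^^ (k - 1 + j)) x \<in> J"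
        by (intro less.hyps) auto
      then show "weyl_scal (1 / fact j) ((?N ^^ (k - 1 + j)) x) \<in> J"
        by (rule weyl_subspace_weyl_scal[OF J])
    qed
    ultimately show ?thesis
      using weyl_subspace_diff[OF J e] by simp
  qed
qed

lemma weyl_ad_mem_if_weyl_exp_ad_mem:
  fixes J :: "'a::field_char_0 poly poly set"
  assumes J: "weyl_subspace J" and exp: "\<And>x. x \<in> J \<Longrightarrow> weyl_exp_ad [:p:] x \<in> J"
  shows "x \<in> J \<Longrightarrow> weyl_ad [:p:] x \<in> J"
proof (induction "degree x" arbitrary: x rule: less_induct)
  case less
  let ?N = "weyl_ad [:p:]"
  define e where "e = weyl_exp_ad [:p:] x - x"
  have "e \<in> J"
    unfolding e_def by (rule weyl_subspace_diff[OF J exp[OF less.prems] less.prems])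
  have lower: "?N y \<in> J \<and> deg_below (degree x) (?N y)" if "y \<in> J" "deg_below (degree x) y" for y
  proof (cases "y = 0")
    case False
    then have "degree y < degree x"
      using that(2) by (rule deg_below_imp_degree_less[rotated])
    then show ?thesis
      using less.hyps that deg_below_weyl_ad by blast
  qed (simp add: weyl_subspace_0[OF J])
  have "deg_below (degree x) e"
    unfolding e_def by (rule deg_below_weyl_exp_ad_minus_self)
  have "(?N ^^ k) e \<in> J \<and> deg_below (degree x) ((?N ^^ k) e)" for k
  proof (induction k)
    case (Suc k)
    then show ?case
      using lower by simp
  qed (simp add: \<open>e \<in> J\<close> \<open>deg_below (degree x) e\<close>)
  then have "(?N ^^ k) (weyl_exp_ad [:p:] x - x) \<in> J" for k
    by (simp add: e_def)
  from weyl_ad_power_mem_if_exp_ad_minus_self[OF J deg_below_Suc_degree zero_less_Suc this, of 1]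
  show ?case
    by simp
qed

lemma weyl_exp_ad_mem_if_weyl_ad_mem:
  fixes J :: "'a::field_char_0 poly poly set"
  assumes J: "weyl_subspace J" and ad: "\<And>x. x \<in> J \<Longrightarrow> weyl_ad [:p:] x \<in> J"
  shows "x \<in> J \<Longrightarrow> weyl_exp_ad [:p:] x \<in> J"
proof -
  assume "x \<in> J"
  then have "(weyl_ad [:p:] ^^ k) x \<in> J" for k
    by (induction k) (simp_all add: ad)
  then show ?thesis
    unfolding weyl_exp_ad_eq_trunc[OF deg_below_Suc_degree] exp_ad_trunc_def
    by (intro weyl_subspace_sum[OF J] weyl_subspace_weyl_scal[OF J])
qed

lemma weyl_exp_ad_image_if_weyl_ad_mem:
  fixes J :: "'a::field_char_0 poly poly set"
  assumes J: "weyl_subspace J" and ad: "\<And>x. x \<in> J \<Longrightarrow> weyl_ad [:p:] x \<in> J"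
  shows "weyl_exp_ad [:p:] ` J = J"
proof -
  have exp: "weyl_exp_ad [:p:] x \<in> J" if "x \<in> J" for x
    by (rule weyl_exp_ad_mem_if_weyl_ad_mem[OF J ad that])
  have "x \<in> weyl_exp_ad [:p:] ` J" if "x \<in> J" for x
    using that
  proof (induction "degree x" arbitrary: x rule: less_induct)
    case less
    define e where "e = weyl_exp_ad [:p:] x - x"
    show ?case
    proof (cases "e = 0")
      case True
      then have "x = weyl_exp_ad [:p:] x"
        by (simp add: e_def)
      then show ?thesis
        using less.prems by (rule image_eqI)
    next
      case False
      moreover have "deg_below (degree x) e"
        unfolding e_def by (rule deg_below_weyl_exp_ad_minus_self)
      ultimately have "degree e < degree x"
        by (simp add: deg_below_imp_degree_less)
      moreover have "e \<in> J"
        unfolding e_def by (rule weyl_subspace_diff[OF J exp[OF less.prems] less.prems])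
      ultimately obtain y where "y \<in> J" and y: "weyl_exp_ad [:p:] y = e"
        using less.hyps by (metis imageE)
      have "weyl_exp_ad [:p:] (x - y) = x"
        by (simp add: weyl_exp_ad_diff y e_def)
      moreover have "x - y \<in> J"
        by (rule weyl_subspace_diff[OF J less.prems \<open>y \<in> J\<close>])
      ultimately show ?thesis
        by (metis image_eqI)
    qed
  qed
  with exp show ?thesis
    by blast
qed

lemma weyl_exp_ad_image_eq_iff:
  fixes J :: "'a::field_char_0 poly poly set"
  assumes "weyl_subspace J"
  shows "weyl_exp_ad [:p:] ` J = J \<longleftrightarrow> (\<forall>x\<in>J. weyl_ad [:p:] x \<in> J)"
  using weyl_ad_mem_if_weyl_exp_ad_mem[OF assms] weyl_exp_ad_image_if_weyl_ad_mem[OF assms]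
  by blast

section \<open>Differential operators mapping k[t] into W\<close>

definition weyl_ops_into :: "'a::field poly set \<Rightarrow> 'a poly poly set" where
  "weyl_ops_into W = {x. \<forall>f. weyl_act x f \<in> W}"

lemma poly_to_frac_eq_iff: "poly_to_frac a = poly_to_frac b \<longleftrightarrow> a = b"
  by (simp add: poly_to_frac_def eq_fract)

lemma poly_to_frac_0 [simp]: "poly_to_frac 0 = 0"
  by (simp add: poly_to_frac_def fract_collapse)

lemma poly_to_frac_add: "poly_to_frac (a + b) = poly_to_frac a + poly_to_frac b"
  by (simp add: poly_to_frac_def)

lemma poly_to_frac_mult: "poly_to_frac (a * b) = poly_to_frac a * poly_to_frac b"
  by (simp add: poly_to_frac_def)

lemma poly_to_frac_sum: "poly_to_frac (\<Sum>i\<in>A. g i) = (\<Sum>i\<in>A. poly_to_frac (g i))"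
  by (induction A rule: infinite_finite_induct)
    (simp_all add: poly_to_frac_add)

lemma diffop_act_map_poly_to_frac:
  "diffop_act (map_poly poly_to_frac x) f = poly_to_frac (weyl_act x f)"
proof -
  have "poly_to_frac c \<noteq> 0" if "c \<noteq> 0" for c :: "'a poly"
    using that poly_to_frac_eq_iff[of c 0] by simp
  then have "degree (map_poly poly_to_frac x) = degree x"
    by (intro degree_map_poly)
  then show ?thesis
    by (simp add: diffop_act_def weyl_act_def coeff_map_poly poly_to_frac_sum poly_to_frac_mult)
qed

lemma inj_map_poly_poly_to_frac: "inj (map_poly (poly_to_frac :: 'a::field poly \<Rightarrow> _))"
proof (rule injI)
  fix x y :: "'a poly poly"
  assume "map_poly poly_to_frac x = map_poly poly_to_frac y"
  then have "coeff (map_poly poly_to_frac x) n = coeff (map_poly poly_to_frac y) n" for n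
    by simp
  then show "x = y"
    by (intro poly_eqI) (simp add: coeff_map_poly poly_to_frac_eq_iff)
qed

lemma map_poly_poly_to_frac_mem_D_RW_iff:
  "map_poly poly_to_frac x \<in> D_RW W \<longleftrightarrow> x \<in> weyl_ops_into W"
  by (simp add: D_RW_def weyl_ops_into_def diffop_act_map_poly_to_frac image_iff poly_to_frac_eq_iff)

lemma eq_weyl_ops_into_if_D_RW:
  assumes "map_poly poly_to_frac ` J = D_RW W"
  shows "J = weyl_ops_into W"
proof (intro set_eqI iffI)
  fix x assume "x \<in> J"
  then show "x \<in> weyl_ops_into W"
    using assms by (auto simp flip: map_poly_poly_to_frac_mem_D_RW_iff)
next
  fix x assume "x \<in> weyl_ops_into W"
  then have "map_poly poly_to_frac x \<in> map_poly poly_to_frac ` J"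
    using assms by (simp add: map_poly_poly_to_frac_mem_D_RW_iff)
  then show "x \<in> J"
    by (auto dest: injD[OF inj_map_poly_poly_to_frac])
qed

lemma k_subspace_diff: "k_subspace W \<Longrightarrow> x \<in> W \<Longrightarrow> y \<in> W \<Longrightarrow> x - y \<in> W"
  unfolding k_subspace_def
  by (metis diff_conv_add_uminus minus_one_mult_self smult_1_left smult_minus_left)

lemma weyl_subspace_weyl_ops_into: "k_subspace W \<Longrightarrow> weyl_subspace (weyl_ops_into W)"
  by (auto simp: weyl_subspace_def weyl_ops_into_def k_subspace_def weyl_act_add weyl_act_diff
      weyl_act_weyl_scal k_subspace_diff)

lemma pderiv_alternating_leibniz_sum:
  "pderiv (\<Sum>k\<le>n. smult ((-1) ^ k) ((pderiv ^^ k) u * (pderiv ^^ (n - k)) f)) =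
     u * (pderiv ^^ Suc n) f + smult ((-1) ^ n) ((pderiv ^^ Suc n) u * f)"
  for u f :: "'a::field poly"
proof (induction n arbitrary: u)
  case 0
  then show ?case
    by (simp add: pderiv_mult algebra_simps)
next
  case (Suc n)
  define S where "S v m = (\<Sum>k\<le>m. smult ((-1) ^ k) ((pderiv ^^ k) v * (pderiv ^^ (m - k)) f))"
    for v m
  have "S u (Suc n) = u * (pderiv ^^ Suc n) f - S (pderiv u) n"
    unfolding S_def
    by (subst sum.atMost_Suc_shift)
      (simp add: funpow_Suc_right sum_negf del: funpow.simps sum.atMost_Suc)
  then have "pderiv (S u (Suc n)) = pderiv (u * (pderiv ^^ Suc n) f) - pderiv (S (pderiv u) n)"
    by (simp add: pderiv_diff)
  also have "pderiv (S (pderiv u) n) =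
      pderiv u * (pderiv ^^ Suc n) f + smult ((-1) ^ n) ((pderiv ^^ Suc (Suc n)) u * f)"
    unfolding S_def Suc.IH by (simp only: funpow_Suc_right o_apply)
  finally show ?case
    unfolding S_def by (simp add: pderiv_mult algebra_simps)
qed

lemma higher_pderiv_degree: "(pderiv ^^ degree p) p = [:fact (degree p) * lead_coeff p:]"
  for p :: "'a::field_char_0 poly"
  by (simp add: poly_eq_iff coeff_higher_pderiv coeff_pCons pochhammer_fact coeff_eq_0 split: nat.split)

lemma higher_pderiv_Suc_degree: "(pderiv ^^ Suc (degree p)) p = 0"
  for p :: "'a::field_char_0 poly"
  by (simp add: poly_eq_iff coeff_higher_pderiv coeff_eq_0 del: funpow.simps)

lemma higher_pderiv_1: "0 < m \<Longrightarrow> (pderiv ^^ m) (1 :: 'a::field_char_0 poly) = 0"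
  using higher_pderiv_monom_gt[of 0 m 1] by (simp add: monom_0 one_pCons)

text \<open>For u of degree N, the operator f \<mapsto> \<Sum>k (-1)^k u^(k) f^(N-k) has derivative u f^(N+1) by
  telescoping, so with b dividing u its values lie in O(b), hence in S(W).\<close>
lemma exists_weyl_ops_into_act_1:
  fixes b w :: "'a::field_char_0 poly"
  assumes "b \<noteq> 0" and "ord_O b \<subseteq> stab_S W" and "w \<in> W"
  shows "\<exists>X \<in> weyl_ops_into W. weyl_act X 1 = w"
proof -
  define N where "N = degree b"
  define u where "u = smult ((-1) ^ N / (fact N * lead_coeff b)) b"
  define c where "c f = (\<Sum>k\<le>N. smult ((-1) ^ k) ((pderiv ^^ k) u * (pderiv ^^ (N - k)) f))" for f
  have u_N: "(pderiv ^^ N) u = [:(-1) ^ N:]"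
    using assms(1) by (simp add: u_def N_def higher_pderiv_smult higher_pderiv_degree)
  have "(pderiv ^^ Suc N) u = 0"
    by (simp only: u_def N_def higher_pderiv_smult higher_pderiv_Suc_degree smult_0_right)
  have c_stab: "c f \<in> stab_S W" for f
  proof -
    have "pderiv (c f) = u * (pderiv ^^ Suc N) f"
      unfolding c_def pderiv_alternating_leibniz_sum \<open>(pderiv ^^ Suc N) u = 0\<close> by simp
    then have "b dvd pderiv (c f)"
      by (auto simp: u_def intro!: dvd_smult)
    then show ?thesis
      using assms(2) by (auto simp: ord_O_def)
  qed
  have "c 1 = (\<Sum>k\<le>N. if k = N then smult ((-1) ^ N) ((pderiv ^^ N) u) else 0)"
    unfolding c_def by (intro sum.cong refl) (auto simp: higher_pderiv_1)
  then have c_1: "c 1 = 1"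
    by (simp add: u_N)
  define X where "X = (\<Sum>k\<le>N. monom (w * smult ((-1) ^ k) ((pderiv ^^ k) u)) (N - k))"
  have act_X: "weyl_act X f = c f * w" for f
    by (simp add: X_def c_def weyl_act_sum weyl_act_monom sum_distrib_left mult_smult_right ac_simps)
  have "X \<in> weyl_ops_into W"
    using c_stab assms(3) by (simp add: weyl_ops_into_def act_X stab_S_def)
  moreover have "weyl_act X 1 = w"
    by (simp add: act_X c_1)
  ultimately show ?thesis
    by blast
qed

lemma weyl_act_weyl_ad_pCons0: "weyl_act (weyl_ad [:p:] x) f = weyl_act x (p * f) - p * weyl_act x f"
  by (simp add: weyl_ad_def weyl_act_diff weyl_act_mult weyl_act_pCons0)

lemma weyl_ad_mem_weyl_ops_into_iff:
  fixes W :: "'a::field_char_0 poly set"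
  assumes W: "k_subspace W" and "b \<noteq> 0" and "ord_O b \<subseteq> stab_S W"
  shows "(\<forall>x\<in>weyl_ops_into W. weyl_ad [:q:] x \<in> weyl_ops_into W) \<longleftrightarrow> q \<in> stab_S W"
proof
  assume ad: "\<forall>x\<in>weyl_ops_into W. weyl_ad [:q:] x \<in> weyl_ops_into W"
  show "q \<in> stab_S W"
    unfolding stab_S_def
  proof (intro CollectI ballI)
    fix v assume "v \<in> W"
    then obtain X where X: "X \<in> weyl_ops_into W" and "weyl_act X 1 = v"
      using exists_weyl_ops_into_act_1 assms(2,3) by blast
    then have "weyl_act (weyl_ad [:q:] X) 1 \<in> W"
      using ad by (simp add: weyl_ops_into_def)
    then have "weyl_act X q - q * v \<in> W"
      by (simp add: weyl_act_weyl_ad_pCons0 \<open>weyl_act X 1 = v\<close>)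
    moreover have "weyl_act X q \<in> W"
      using X by (simp add: weyl_ops_into_def)
    ultimately show "q * v \<in> W"
      using k_subspace_diff[OF W] by fastforce
  qed
next
  assume "q \<in> stab_S W"
  then show "\<forall>x\<in>weyl_ops_into W. weyl_ad [:q:] x \<in> weyl_ops_into W"
    by (auto simp: weyl_ops_into_def weyl_act_weyl_ad_pCons0 stab_S_def intro: k_subspace_diff[OF W])
qed

lemma weyl_exp_ad_image_eq_iff_weyl_theta:
  fixes I :: "'a::field_char_0 poly poly set"
  shows "weyl_exp_ad Q ` I = I \<longleftrightarrow> weyl_exp_ad (weyl_theta Q) ` weyl_theta ` I = weyl_theta ` I"
proof -
  have "weyl_theta ` weyl_exp_ad Q ` I = weyl_exp_ad (weyl_theta Q) ` weyl_theta ` I"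
    by (simp add: image_image weyl_theta_weyl_exp_ad)
  then show ?thesis
    by (metis inj_image_eq_iff[OF inj_weyl_theta])
qed

theorem corollary7:
  fixes I :: "'a::field_char_0 poly poly set" and W :: "'a poly set" and q :: "'a poly"
  assumes "weyl_right_ideal I"
    and "\<exists>x\<in>I. x \<noteq> 0 \<and> x \<in> weyl_kd"
    and "primary_decomposable W"
    and "map_poly poly_to_frac ` weyl_theta ` I = D_RW W"
  shows "weyl_exp_ad (weyl_of_kd q) ` I = I \<longleftrightarrow>
         weyl_theta (weyl_of_kd q) \<in> (\<lambda>a. [:a:]) ` stab_S W"
proof -
  obtain b where W: "k_subspace W" and "b \<noteq> 0" and "ord_O b \<subseteq> stab_S W"
    using assms(3) unfolding primary_decomposable_def by blast
  have J: "weyl_theta ` I = weyl_ops_into W"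
    using assms(4) by (rule eq_weyl_ops_into_if_D_RW)
  have "weyl_exp_ad (weyl_of_kd q) ` I = I \<longleftrightarrow>
      weyl_exp_ad [:q:] ` weyl_ops_into W = weyl_ops_into W"
    by (simp only: weyl_exp_ad_image_eq_iff_weyl_theta[of "weyl_of_kd q"] weyl_theta_weyl_of_kd J)
  also have "\<dots> \<longleftrightarrow> (\<forall>x\<in>weyl_ops_into W. weyl_ad [:q:] x \<in> weyl_ops_into W)"
    using W by (intro weyl_exp_ad_image_eq_iff weyl_subspace_weyl_ops_into)
  also have "\<dots> \<longleftrightarrow> q \<in> stab_S W"
    using W \<open>b \<noteq> 0\<close> \<open>ord_O b \<subseteq> stab_S W\<close> by (rule weyl_ad_mem_weyl_ops_into_iff)
  also have "\<dots> \<longleftrightarrow> weyl_theta (weyl_of_kd q) \<in> (\<lambda>a. [:a:]) ` stab_S W"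
    by (auto simp: weyl_theta_weyl_of_kd)
  finally show ?thesis .
qed

end
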